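(* Let $T$ be a tournament, let $v$ be a vertex with $d^-(v)=0$, and let $M\subseteq V(T)$. Then $T$ is $M$-sparse if and only if $T-v$ is $(M\setminus\{v\})$-sparse.
   Context: A tournament is a digraph with exactly one arc between each pair of distinct vertices; $d^-(v)$ is the in-degree of $v$ and $T-v$ is the subtournament induced by $V(T)\setminus\{v\}$. For an ordering $\sigma$ of the vertices, an arc $(x,y)$ is backward if $y$ precedes $x$, and $d_\sigma(u)$ is the number of backward arcs incident to $u$. For a tournament $S$ and $N\subseteq V(S)$, $S$ is $N$-sparse if there is an ordering $\sigma$ of $V(S)$ with $d_\sigma(u)\le1$ for all $u$ and $d_\sigma(u)=0$ for all $u\in N$. *)

theory Defs
  imports Main
begin

definition tournament :: "'a set \<Rightarrow> ('a \<times> 'a) set \<Rightarrow> bool" where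
  "tournament V A \<longleftrightarrow> finite V \<and> A \<subseteq> V \<times> V \<and> (\<forall>x. (x, x) \<notin> A) \<and>
     (\<forall>x\<in>V. \<forall>y\<in>V. x \<noteq> y \<longrightarrow> ((x, y) \<in> A \<longleftrightarrow> (y, x) \<notin> A))"

definition in_degree :: "('a \<times> 'a) set \<Rightarrow> 'a \<Rightarrow> nat" where
  "in_degree A v = card {u. (u, v) \<in> A}"

definition del_vertex_arcs :: "'a set \<Rightarrow> ('a \<times> 'a) set \<Rightarrow> 'a \<Rightarrow> ('a \<times> 'a) set" where
  "del_vertex_arcs V A v = A \<inter> ((V - {v}) \<times> (V - {v}))"

definition is_ordering :: "'a set \<Rightarrow> 'a list \<Rightarrow> bool" where
  "is_ordering V \<sigma> \<longleftrightarrow> distinct \<sigma> \<and> set \<sigma> = V"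

definition precedes :: "'a list \<Rightarrow> 'a \<Rightarrow> 'a \<Rightarrow> bool" where
  "precedes \<sigma> y x \<longleftrightarrow> (\<exists>i j. i < j \<and> j < length \<sigma> \<and> \<sigma> ! i = y \<and> \<sigma> ! j = x)"

definition backward_arcs :: "('a \<times> 'a) set \<Rightarrow> 'a list \<Rightarrow> ('a \<times> 'a) set" where
  "backward_arcs A \<sigma> = {(x, y). (x, y) \<in> A \<and> precedes \<sigma> y x}"

definition back_deg :: "('a \<times> 'a) set \<Rightarrow> 'a list \<Rightarrow> 'a \<Rightarrow> nat" where
  "back_deg A \<sigma> u = card {e \<in> backward_arcs A \<sigma>. fst e = u \<or> snd e = u}"

definition sparse :: "'a set \<Rightarrow> ('a \<times> 'a) set \<Rightarrow> 'a set \<Rightarrow> bool" where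
  "sparse V A N \<longleftrightarrow> (\<exists>\<sigma>. is_ordering V \<sigma> \<and> (\<forall>u\<in>V. back_deg A \<sigma> u \<le> 1) \<and>
                            (\<forall>u\<in>N. back_deg A \<sigma> u = 0))"

end

theory Submission
  imports Defs
begin

text \<open>A source can be placed first in any ordering without creating backward arcs, and deleting
a vertex from an ordering never creates backward arcs either. Hence orderings witnessing sparsity
of \<open>T - v\<close> and of \<open>T\<close> correspond to each other by adding or removing the source \<open>v\<close> at the front.\<close>

lemma precedes_imp_mem: "precedes \<sigma> y x \<Longrightarrow> x \<in> set \<sigma> \<and> y \<in> set \<sigma>"
  unfolding precedes_def by auto

lemma precedes_Cons:
  "precedes (a # \<sigma>) y x \<longleftrightarrow> (a = y \<and> x \<in> set \<sigma>) \<or> precedes \<sigma> y x"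
proof
  assume "precedes (a # \<sigma>) y x"
  then obtain i j where "i < j" "j < length (a # \<sigma>)" "(a # \<sigma>) ! i = y" "(a # \<sigma>) ! j = x"
    unfolding precedes_def by blast
  then show "(a = y \<and> x \<in> set \<sigma>) \<or> precedes \<sigma> y x"
    unfolding precedes_def by (cases i; cases j) auto
next
  assume "(a = y \<and> x \<in> set \<sigma>) \<or> precedes \<sigma> y x"
  then show "precedes (a # \<sigma>) y x"
  proof
    assume "a = y \<and> x \<in> set \<sigma>"
    then obtain j where "j < length \<sigma>" "\<sigma> ! j = x" "a = y"
      by (auto simp: in_set_conv_nth)
    then show ?thesis
      unfolding precedes_def by (intro exI[of _ 0] exI[of _ "Suc j"]) auto
  next
    assume "precedes \<sigma> y x"
    then obtain i j where "i < j" "j < length \<sigma>" "\<sigma> ! i = y" "\<sigma> ! j = x"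
      unfolding precedes_def by blast
    then show ?thesis
      unfolding precedes_def by (intro exI[of _ "Suc i"] exI[of _ "Suc j"]) auto
  qed
qed

lemma precedes_filter:
  "precedes (filter P \<sigma>) y x \<longleftrightarrow> P y \<and> P x \<and> precedes \<sigma> y x"
  by (induction \<sigma>) (auto simp: precedes_Cons precedes_def[of "[]"])

lemma backward_arcs_subset_set: "backward_arcs A \<sigma> \<subseteq> set \<sigma> \<times> set \<sigma>"
  unfolding backward_arcs_def by (auto dest: precedes_imp_mem)

lemma finite_backward_arcs: "finite (backward_arcs A \<sigma>)"
  by (rule finite_subset[OF backward_arcs_subset_set]) simp

lemma backward_arcs_filter_subset: "backward_arcs A (filter P \<sigma>) \<subseteq> backward_arcs A \<sigma>"
  unfolding backward_arcs_def by (auto simp: precedes_filter)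

lemma backward_arcs_restrict:
  assumes "set \<sigma> \<subseteq> W"
  shows "backward_arcs (A \<inter> W \<times> W) \<sigma> = backward_arcs A \<sigma>"
  using assms unfolding backward_arcs_def by (auto dest: precedes_imp_mem)

lemma backward_arcs_Cons_source:
  assumes "\<And>u. (u, v) \<notin> A"
  shows "backward_arcs A (v # \<sigma>) = backward_arcs A \<sigma>"
  using assms unfolding backward_arcs_def by (auto simp: precedes_Cons)

lemma back_deg_mono:
  assumes "backward_arcs B \<tau> \<subseteq> backward_arcs A \<sigma>"
  shows "back_deg B \<tau> u \<le> back_deg A \<sigma> u"
  unfolding back_deg_def using assms finite_backward_arcs[of A \<sigma>]
  by (intro card_mono) auto

lemma back_deg_notin: "u \<notin> set \<sigma> \<Longrightarrow> back_deg A \<sigma> u = 0"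
  unfolding back_deg_def using backward_arcs_subset_set[of A \<sigma>] finite_backward_arcs[of A \<sigma>]
  by (subst card_0_eq) auto

lemma in_degree_eq_0_iff:
  assumes "finite A"
  shows "in_degree A v = 0 \<longleftrightarrow> (\<forall>u. (u, v) \<notin> A)"
proof -
  have "{u. (u, v) \<in> A} \<subseteq> fst ` A" by force
  then have "finite {u. (u, v) \<in> A}"
    using assms by (meson finite_imageI finite_subset)
  then show ?thesis unfolding in_degree_def by auto
qed

lemma sparse_subset:
  assumes "sparse V A N" and "W \<subseteq> V" and "N' \<subseteq> N"
  shows "sparse W A N'"
proof -
  obtain \<sigma> where \<sigma>: "is_ordering V \<sigma>" "\<forall>u\<in>V. back_deg A \<sigma> u \<le> 1" "\<forall>u\<in>N. back_deg A \<sigma> u = 0"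
    using assms(1) unfolding sparse_def by blast
  let ?\<tau> = "filter (\<lambda>x. x \<in> W) \<sigma>"
  have ordering: "is_ordering W ?\<tau>"
    using \<sigma>(1) assms(2) unfolding is_ordering_def by auto
  have le: "back_deg A ?\<tau> u \<le> back_deg A \<sigma> u" for u
    by (rule back_deg_mono[OF backward_arcs_filter_subset])
  have "\<forall>u\<in>W. back_deg A ?\<tau> u \<le> 1"
    using \<sigma>(2) assms(2) le by (meson order_trans subsetD)
  moreover have "\<forall>u\<in>N'. back_deg A ?\<tau> u = 0"
    using \<sigma>(3) assms(3) le by (metis le_zero_eq subsetD)
  ultimately show ?thesis
    unfolding sparse_def using ordering by blast
qed

lemma back_deg_restrict:
  assumes "is_ordering W \<sigma>"
  shows "back_deg (A \<inter> W \<times> W) \<sigma> = back_deg A \<sigma>"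
proof -
  have "set \<sigma> \<subseteq> W"
    using assms unfolding is_ordering_def by simp
  then show ?thesis
    unfolding back_deg_def by (simp only: backward_arcs_restrict)
qed

lemma sparse_restrict_arcs: "sparse W (A \<inter> W \<times> W) N \<longleftrightarrow> sparse W A N"
  unfolding sparse_def by (auto simp: back_deg_restrict)

lemma sparse_insert_source:
  assumes "sparse W A N" and "v \<notin> W" and "\<And>u. (u, v) \<notin> A"
  shows "sparse (insert v W) A (insert v N)"
proof -
  obtain \<sigma> where \<sigma>: "is_ordering W \<sigma>" "\<forall>u\<in>W. back_deg A \<sigma> u \<le> 1" "\<forall>u\<in>N. back_deg A \<sigma> u = 0"
    using assms(1) unfolding sparse_def by blast
  have "is_ordering (insert v W) (v # \<sigma>)"
    using \<sigma>(1) assms(2) unfolding is_ordering_def by auto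
  moreover have "back_deg A (v # \<sigma>) u = back_deg A \<sigma> u" for u
    unfolding back_deg_def backward_arcs_Cons_source[OF assms(3)] ..
  moreover have "back_deg A \<sigma> v = 0"
    using \<sigma>(1) assms(2) unfolding is_ordering_def by (simp add: back_deg_notin)
  ultimately show ?thesis
    unfolding sparse_def using \<sigma>(2,3) by (intro exI[of _ "v # \<sigma>"]) auto
qed

theorem mainTheorem14:
  fixes V :: "'a set" and A :: "('a \<times> 'a) set" and v :: 'a and M :: "'a set"
  assumes "tournament V A" and "v \<in> V" and "in_degree A v = 0" and "M \<subseteq> V"
  shows "sparse V A M \<longleftrightarrow> sparse (V - {v}) (del_vertex_arcs V A v) (M - {v})"
proof -
  have "finite A"
    using assms(1) unfolding tournament_def by (meson finite_SigmaI finite_subset)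
  then have source: "\<And>u. (u, v) \<notin> A"
    using assms(3) by (simp add: in_degree_eq_0_iff)
  have "sparse (V - {v}) (del_vertex_arcs V A v) (M - {v}) \<longleftrightarrow> sparse (V - {v}) A (M - {v})"
    unfolding del_vertex_arcs_def by (rule sparse_restrict_arcs)
  also have "\<dots> \<longleftrightarrow> sparse V A M"
  proof
    assume "sparse (V - {v}) A (M - {v})"
    then have "sparse (insert v (V - {v})) A (insert v (M - {v}))"
      by (rule sparse_insert_source[OF _ _ source]) simp
    then show "sparse V A M"
      by (rule sparse_subset) auto
  next
    assume "sparse V A M"
    then show "sparse (V - {v}) A (M - {v})"
      by (rule sparse_subset) auto
  qed
  finally show ?thesis ..
qed

end
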